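(* Let $X$ be an infinite set of integers. For all positive integers $h$ and $k$, \[ L_{X,h}(k) \subseteq L_{X,h}(k+1). \] If moreover $\mathbf{N}_0 = \{0,1,2,\ldots\} \subseteq X$, then \[ L_{X,h}(k) \subsetneq L_{X,h}(k+1). \]
   Context: For integers $a<b$, $[a,b]=\{j\in\mathbf{Z}: a\le j\le b\}$, and $[0,0]=\{0\}$. For a set $A$ of integers and a positive integer $h$, the $h$-fold sumset is $hA=\{a_1+\cdots+a_h : a_i\in A \text{ for all } i\}$ (summands not necessarily distinct). For a nonempty finite set $A$ of integers with $0\in hA$, $\ell_h(A)$ denotes the largest integer $n\ge 0$ such that $[0,n]\subseteq hA$ (so $\ell_h(A)=0$ if $0\in hA$ but $1\notin hA$); $\ell_h(A)$ is undefined if $0\notin hA$. For a nonempty set $X$ of integers, $\mathcal{A}_X(k)=\{A\subseteq X: |A|=k\}$, and $L_{X,h}(k)=\{\ell_h(A): A\in\mathcal{A}_X(k),\ \ell_h(A)\text{ defined}\}$. *)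

theory Defs
  imports Main
begin

definition sumset :: "nat \<Rightarrow> int set \<Rightarrow> int set" where
  "sumset h A = {(\<Sum>i<h. a i) | a. \<forall>i<h. a i \<in> A}"

text \<open>ell h A: the largest n >= 0 with [0,n] contained in hA (meaningful only when 0 is in hA
  and A is finite).\<close>
definition ell :: "nat \<Rightarrow> int set \<Rightarrow> nat" where
  "ell h A = (GREATEST n. {0..int n} \<subseteq> sumset h A)"

definition Lset :: "int set \<Rightarrow> nat \<Rightarrow> nat \<Rightarrow> nat set" where
  "Lset X h k = {ell h A | A. A \<subseteq> X \<and> finite A \<and> card A = k \<and> 0 \<in> sumset h A}"

end

theory Submission
  imports Defs "HOL-Library.FuncSet"
begin

text \<open>Inclusion: if \<open>ell_h(A) = n\<close>, adjoin some \<open>x \<in> X\<close> of absolute value so large that every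
  \<open>h\<close>-fold sum involving \<open>x\<close> lies outside \<open>[-(n+1), n+1]\<close>. Then \<open>[0, n+1] \<inter> hA\<close> is unchanged, and
  so is \<open>ell_h\<close>.
  Strictness: \<open>ell_h(A) < |hA| \<le> k^h\<close>, so \<open>L_{X,h}(k)\<close> is finite; let \<open>A\<close> realise its maximum \<open>m\<close>.
  Write \<open>0 = a_1 + ... + a_h\<close> and pick a summand \<open>a_j \<ge> 0\<close>. Replacing it by \<open>x = m + 1 + a_j \<ge> 0\<close>
  gives the sum \<open>m + 1\<close>, so \<open>x \<notin> A\<close>, and \<open>ell_h(A \<union> {x}) > m\<close> is a value of \<open>L_{X,h}(k+1)\<close>
  outside \<open>L_{X,h}(k)\<close>.\<close>

lemma sumset_eq_image_PiE: "sumset h A = (\<lambda>a. \<Sum>i<h. a i) ` (PiE {..<h} (\<lambda>_. A))"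
proof
  show "sumset h A \<subseteq> (\<lambda>a. \<Sum>i<h. a i) ` (PiE {..<h} (\<lambda>_. A))"
  proof
    fix t assume "t \<in> sumset h A"
    then obtain a where t: "t = (\<Sum>i<h. a i)" and a: "\<forall>i<h. a i \<in> A"
      unfolding sumset_def by blast
    have "restrict a {..<h} \<in> PiE {..<h} (\<lambda>_. A)" using a by auto
    moreover have "t = (\<Sum>i<h. restrict a {..<h} i)" using t by simp
    ultimately show "t \<in> (\<lambda>a. \<Sum>i<h. a i) ` (PiE {..<h} (\<lambda>_. A))" by blast
  qed
  show "(\<lambda>a. \<Sum>i<h. a i) ` (PiE {..<h} (\<lambda>_. A)) \<subseteq> sumset h A"
    unfolding sumset_def by (auto simp: PiE_def Pi_def)
qed

lemma finite_sumset: "finite A \<Longrightarrow> finite (sumset h A)"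
  unfolding sumset_eq_image_PiE by (auto intro: finite_PiE)

lemma card_sumset_le:
  assumes "finite A"
  shows "card (sumset h A) \<le> card A ^ h"
proof -
  have "card (sumset h A) \<le> card (PiE {..<h} (\<lambda>_. A))"
    unfolding sumset_eq_image_PiE by (rule card_image_le) (auto intro: finite_PiE assms)
  also have "\<dots> = card A ^ h" by (simp add: card_PiE)
  finally show ?thesis .
qed

lemma sumset_mono: "A \<subseteq> B \<Longrightarrow> sumset h A \<subseteq> sumset h B"
  unfolding sumset_def by blast

lemma sumset_memI: "\<forall>i<h. a i \<in> A \<Longrightarrow> (\<Sum>i<h. a i) \<in> sumset h A"
  unfolding sumset_def by blast

lemma zero_in_sumset: "0 \<in> A \<Longrightarrow> 0 \<in> sumset h A"
  using sumset_memI[of h "\<lambda>_. 0"] by simp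

lemma sum_lessThan_remove:
  fixes a :: "nat \<Rightarrow> 'a::comm_monoid_add"
  assumes "j < h"
  shows "(\<Sum>i<h. a i) = a j + (\<Sum>i\<in>{..<h} - {j}. a i)"
  by (rule sum.remove) (use assms in auto)

lemma sum_lessThan_fun_upd:
  fixes a :: "nat \<Rightarrow> 'a::ab_group_add"
  assumes "j < h"
  shows "(\<Sum>i<h. (a(j := y)) i) = (\<Sum>i<h. a i) - a j + y"
proof -
  have "(\<Sum>i\<in>{..<h} - {j}. (a(j := y)) i) = (\<Sum>i\<in>{..<h} - {j}. a i)"
    by (rule sum.cong) auto
  then show ?thesis
    using sum_lessThan_remove[OF assms, of a] sum_lessThan_remove[OF assms, of "a(j := y)"]
    by (simp add: algebra_simps)
qed

lemma less_card_of_interval_subset: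
  assumes "finite S" and "{0..int n} \<subseteq> S"
  shows "n < card S"
proof -
  have "card {0..int n} \<le> card S" using card_mono[OF assms] .
  then show ?thesis by simp
qed

lemma le_ell:
  assumes "finite A" and "{0..int n} \<subseteq> sumset h A"
  shows "n \<le> ell h A"
  unfolding ell_def using assms(2)
proof (rule Greatest_le_nat)
  show "y \<le> card (sumset h A)" if "{0..int y} \<subseteq> sumset h A" for y
    using less_card_of_interval_subset[OF finite_sumset[OF assms(1)] that] by simp
qed

lemma ell_interval_subset:
  assumes "finite A" and "0 \<in> sumset h A"
  shows "{0..int (ell h A)} \<subseteq> sumset h A"
  unfolding ell_def
proof (rule GreatestI_nat[where P = "\<lambda>n. {0..int n} \<subseteq> sumset h A"])
  show "{0..int 0} \<subseteq> sumset h A" using assms(2) by simp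
  show "y \<le> card (sumset h A)" if "{0..int y} \<subseteq> sumset h A" for y
    using less_card_of_interval_subset[OF finite_sumset[OF assms(1)] that] by simp
qed

lemma interval_insert_succ: "{0..int (Suc n)} = insert (int n + 1) {0..int n}"
  using atLeastAtMostPlus1_int_conv[of 0 "int n"] by (simp add: add.commute)

lemma ell_succ_notin_sumset:
  assumes "finite A" and "0 \<in> sumset h A"
  shows "int (ell h A) + 1 \<notin> sumset h A"
proof
  assume "int (ell h A) + 1 \<in> sumset h A"
  then have "{0..int (Suc (ell h A))} \<subseteq> sumset h A"
    unfolding interval_insert_succ using ell_interval_subset[OF assms] by simp
  then have "Suc (ell h A) \<le> ell h A" by (rule le_ell[OF assms(1)])
  then show False by simp
qed

lemma ell_eqI:
  assumes "{0..int n} \<subseteq> sumset h A" and "int n + 1 \<notin> sumset h A"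
  shows "ell h A = n"
  unfolding ell_def
proof (rule Greatest_equality)
  fix y assume y: "{0..int y} \<subseteq> sumset h A"
  show "y \<le> n"
  proof (rule ccontr)
    assume "\<not> y \<le> n"
    then have "int n + 1 \<in> {0..int y}" by auto
    then show False using y assms(2) by blast
  qed
qed (use assms(1) in simp)

lemma ell_less_card_sumset:
  assumes "finite A" and "0 \<in> sumset h A"
  shows "ell h A < card (sumset h A)"
  using less_card_of_interval_subset[OF finite_sumset[OF assms(1)] ell_interval_subset[OF assms]] .

lemma Lset_subset_lessThan: "Lset X h k \<subseteq> {..<k ^ h}"
proof
  fix n assume "n \<in> Lset X h k"
  then obtain A where A: "n = ell h A" "finite A" "card A = k" "0 \<in> sumset h A"
    unfolding Lset_def by blast
  have "n < card (sumset h A)" using ell_less_card_sumset[OF A(2,4)] A(1) by simp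
  also have "\<dots> \<le> k ^ h" using card_sumset_le[OF A(2)] A(3) by simp
  finally show "n \<in> {..<k ^ h}" by simp
qed

lemma finite_Lset: "finite (Lset X h k)"
  by (rule finite_subset[OF Lset_subset_lessThan]) simp

lemma ell_insert_in_Lset_Suc:
  assumes "A \<subseteq> X" "finite A" "card A = k" "0 \<in> sumset h A" "x \<in> X" "x \<notin> A"
  shows "ell h (insert x A) \<in> Lset X h (Suc k)"
proof -
  have "0 \<in> sumset h (insert x A)" using assms(4) sumset_mono[of A "insert x A"] by blast
  then show ?thesis unfolding Lset_def using assms by (intro CollectI exI[of _ "insert x A"]) auto
qed

text \<open>The sign \<open>s\<close> of \<open>x\<close> makes every summand satisfy \<open>s \<cdot> a \<ge> -B\<close>, whether it is \<open>x\<close> or lies in \<open>A\<close>.\<close>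

lemma abs_ge_of_mem_sumset_insert:
  fixes A :: "int set"
  assumes B: "B \<ge> 0" "\<forall>a\<in>A. \<bar>a\<bar> \<le> B"
    and t: "t \<in> sumset h (insert x A)" "t \<notin> sumset h A"
  shows "\<bar>x\<bar> - int h * B \<le> \<bar>t\<bar>"
proof -
  obtain a where ta: "t = (\<Sum>i<h. a i)" and a: "\<forall>i<h. a i \<in> insert x A"
    using t(1) unfolding sumset_def by blast
  obtain j where j: "j < h" "a j = x"
    using a t(2) ta unfolding sumset_def by blast
  define s :: int where "s = (if x \<ge> 0 then 1 else -1)"
  have s_summand: "- B \<le> s * a i" if "i < h" for i
    using a that B unfolding s_def by (cases "a i = x") (auto, fastforce+)
  have "- int h * B \<le> (\<Sum>i\<in>{..<h} - {j}. s * a i)"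
  proof -
    have "- int h * B \<le> (\<Sum>i\<in>{..<h} - {j}. - B)"
      using B(1) card_mono[of "{..<h}" "{..<h} - {j}"] by (simp add: mult_right_mono)
    also have "\<dots> \<le> (\<Sum>i\<in>{..<h} - {j}. s * a i)"
      using s_summand by (intro sum_mono) auto
    finally show ?thesis .
  qed
  moreover have "s * t = \<bar>x\<bar> + (\<Sum>i\<in>{..<h} - {j}. s * a i)"
    using j sum_lessThan_remove[OF j(1), of "\<lambda>i. s * a i"]
    unfolding ta sum_distrib_left by (simp add: s_def)
  moreover have "s * t \<le> \<bar>t\<bar>" unfolding s_def by auto
  ultimately show ?thesis by linarith
qed

lemma ell_insert_far:
  fixes A :: "int set"
  assumes "finite A" "0 \<in> sumset h A" "B \<ge> 0" "\<forall>a\<in>A. \<bar>a\<bar> \<le> B"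
    and x: "\<bar>x\<bar> > int h * B + int (ell h A) + 1"
  shows "ell h (insert x A) = ell h A"
proof (rule ell_eqI)
  show "{0..int (ell h A)} \<subseteq> sumset h (insert x A)"
    using ell_interval_subset[OF assms(1,2)] sumset_mono[of A "insert x A"] by blast
  show "int (ell h A) + 1 \<notin> sumset h (insert x A)"
  proof
    assume "int (ell h A) + 1 \<in> sumset h (insert x A)"
    from abs_ge_of_mem_sumset_insert[OF assms(3,4) this ell_succ_notin_sumset[OF assms(1,2)]]
    show False using x by simp
  qed
qed

lemma Lset_subset_Lset_Suc:
  assumes "infinite X"
  shows "Lset X h k \<subseteq> Lset X h (Suc k)"
proof
  fix n assume "n \<in> Lset X h k"
  then obtain A where n: "n = ell h A" and A: "A \<subseteq> X" "finite A" "card A = k"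
    and zero: "0 \<in> sumset h A"
    unfolding Lset_def by blast
  define B where "B = (\<Sum>a\<in>A. \<bar>a\<bar>)"
  have B: "B \<ge> 0" "\<forall>a\<in>A. \<bar>a\<bar> \<le> B"
    unfolding B_def using A(2) by (auto intro: sum_nonneg member_le_sum[where f = abs])
  define N where "N = int h * B + int n + 1"
  have "infinite (X - A)" using assms A(2) by simp
  then have "\<not> X - A \<subseteq> {-N..N}" using finite_subset by blast
  then obtain x where x: "x \<in> X" "x \<notin> A" "x \<notin> {-N..N}" by blast
  have "\<bar>x\<bar> > N" using x(3) by (auto simp: abs_if)
  have "ell h (insert x A) = n"
    using ell_insert_far[OF A(2) zero B] \<open>\<bar>x\<bar> > N\<close> n unfolding N_def by simp
  then show "n \<in> Lset X h (Suc k)"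
    using ell_insert_in_Lset_Suc[OF A zero x(1,2)] by simp
qed

lemma exists_nonneg_summand:
  fixes a :: "nat \<Rightarrow> int"
  assumes "0 \<le> (\<Sum>i<h. a i)" and "h \<ge> 1"
  shows "\<exists>j<h. 0 \<le> a j"
proof (rule ccontr)
  assume "\<not> ?thesis"
  moreover have "{..<h} \<noteq> {}" using assms(2) by (cases h) auto
  ultimately have "(\<Sum>i<h. a i) < (\<Sum>i<h. 0)"
    by (intro sum_strict_mono) auto
  then show False using assms(1) by simp
qed

lemma ell_insert_increase:
  fixes A :: "int set"
  assumes "finite A" "0 \<in> sumset h A" "h \<ge> 1"
  obtains x where "x \<ge> 0" "x \<notin> A" "ell h A < ell h (insert x A)"
proof -
  let ?m = "ell h A"
  obtain a where a0: "(\<Sum>i<h. a i) = 0" and a: "\<forall>i<h. a i \<in> A"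
    using assms(2) unfolding sumset_def by auto
  obtain j where j: "j < h" "a j \<ge> 0"
    using exists_nonneg_summand[of a h] a0 assms(3) by auto
  define x where "x = int ?m + 1 + a j"
  have "(\<Sum>i<h. (a(j := x)) i) = (\<Sum>i<h. a i) - a j + x"
    by (rule sum_lessThan_fun_upd[OF j(1)])
  also have "\<dots> = int ?m + 1" using a0 unfolding x_def by simp
  finally have sum_upd: "(\<Sum>i<h. (a(j := x)) i) = int ?m + 1" .
  have "x \<notin> A"
  proof
    assume "x \<in> A"
    then have "(\<Sum>i<h. (a(j := x)) i) \<in> sumset h A" using a by (intro sumset_memI) auto
    then show False using sum_upd ell_succ_notin_sumset[OF assms(1,2)] by simp
  qed
  have "(\<Sum>i<h. (a(j := x)) i) \<in> sumset h (insert x A)" using a by (intro sumset_memI) auto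
  then have "int ?m + 1 \<in> sumset h (insert x A)" by (simp only: sum_upd)
  moreover have "{0..int ?m} \<subseteq> sumset h (insert x A)"
    using ell_interval_subset[OF assms(1,2)] sumset_mono[of A "insert x A"] by blast
  ultimately have "{0..int (Suc ?m)} \<subseteq> sumset h (insert x A)"
    unfolding interval_insert_succ by simp
  then have "Suc ?m \<le> ell h (insert x A)"
    using assms(1) by (intro le_ell) simp_all
  show ?thesis
  proof (rule that)
    show "x \<ge> 0" unfolding x_def using j(2) by simp
    show "?m < ell h (insert x A)" using \<open>Suc ?m \<le> ell h (insert x A)\<close> by simp
  qed fact
qed

lemma Lset_psubset_Lset_Suc:
  assumes "{0..} \<subseteq> X" "h \<ge> 1" "k \<ge> 1"
  shows "Lset X h k \<subset> Lset X h (Suc k)"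
proof -
  have "infinite X" using assms(1) infinite_super infinite_Ici by blast
  then have sub: "Lset X h k \<subseteq> Lset X h (Suc k)" by (rule Lset_subset_Lset_Suc)
  have "{0..<int k} \<subseteq> X" using assms(1) by auto
  moreover have "0 \<in> sumset h {0..<int k}" using assms(3) by (intro zero_in_sumset) simp
  ultimately have "ell h {0..<int k} \<in> Lset X h k" unfolding Lset_def by auto
  then have "Max (Lset X h k) \<in> Lset X h k" using finite_Lset Max_in by blast
  then obtain A where max: "ell h A = Max (Lset X h k)"
    and A: "A \<subseteq> X" "finite A" "card A = k" and zero: "0 \<in> sumset h A"
    unfolding Lset_def by auto
  obtain x where x: "x \<ge> 0" "x \<notin> A" "ell h A < ell h (insert x A)"
    using ell_insert_increase[OF A(2) zero assms(2)] .
  have "ell h (insert x A) \<notin> Lset X h k"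
  proof
    assume "ell h (insert x A) \<in> Lset X h k"
    then have "ell h (insert x A) \<le> Max (Lset X h k)" by (intro Max_ge finite_Lset)
    then show False using x(3) max by simp
  qed
  moreover have "ell h (insert x A) \<in> Lset X h (Suc k)"
    using ell_insert_in_Lset_Suc[OF A zero _ x(2)] x(1) assms(1) by auto
  ultimately show ?thesis using sub by blast
qed

theorem mainTheorem1:
  fixes X :: "int set" and h k :: nat
  assumes "infinite X" and "h \<ge> 1" and "k \<ge> 1"
  shows "Lset X h k \<subseteq> Lset X h (k + 1) \<and>
         ({0..} \<subseteq> X \<longrightarrow> Lset X h k \<subset> Lset X h (k + 1))"
  using Lset_subset_Lset_Suc[OF assms(1)] Lset_psubset_Lset_Suc[OF _ assms(2,3)] by simp

end
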